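(* Consider a unitary multi-parameter channel $\rho_0\mapsto U(\theta)\rho_0U(\theta)^\dagger$ on $\mathbb{C}^d$, $\theta=(\theta^1,\dots,\theta^m)\in\mathbb{R}^m$, with $U(\theta)$ unitary and differentiable, and fixed pure input $\rho_0=|\psi_0\rangle\langle\psi_0|$. Let $H(\theta)$ be the SLD quantum information matrix of $\rho_{out}(\theta)=U(\theta)\rho_0U(\theta)^\dagger$ and $C_\Upsilon(\theta)_{jk}=4\,\mathrm{Re}\,\mathrm{tr}\{\frac{\partial U}{\partial\theta^j}\rho_0\frac{\partial U}{\partial\theta^k}^\dagger\}$. Then $H(\theta)=C_\Upsilon(\theta)$ if and only if $\mathrm{tr}\{U(\theta)\rho_0\frac{\partial U(\theta)}{\partial\theta^l}^\dagger\}=0$ for all $l$.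
   Context: The SLD quantum information matrix of a family $\rho(\theta)$ is $H(\theta)_{jk}=\mathrm{Re}\,\mathrm{tr}\{\lambda^{(j)}\rho\lambda^{(k)}\}$, where $\lambda^{(j)}$ is a self-adjoint solution of $\partial\rho/\partial\theta^j=\frac12(\rho\lambda^{(j)}+\lambda^{(j)}\rho)$. For a unitary channel the canonical Kraus representation is the single operator $U(\theta)$, and $C_\Upsilon$ is the corresponding multi-parameter Sarovar–Milburn bound. *)

theory Defs
  imports "HOL-Analysis.Analysis"
begin

text \<open>d x d complex matrices are represented as complex^'d^'d (d = CARD('d));
parameters theta in R^m as real^'m (m = CARD('m)).\<close>

definition mtrace :: "complex^'d^'d \<Rightarrow> complex" where
  "mtrace A = (\<Sum>i\<in>UNIV. A $ i $ i)"

definition cadj :: "complex^'d^'d \<Rightarrow> complex^'d^'d" where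
  "cadj A = (\<chi> i j. cnj (A $ j $ i))"

definition unitary_mat :: "complex^'d^'d \<Rightarrow> bool" where
  "unitary_mat U \<longleftrightarrow> U ** cadj U = mat 1 \<and> cadj U ** U = mat 1"

definition self_adjoint :: "complex^'d^'d \<Rightarrow> bool" where
  "self_adjoint A \<longleftrightarrow> cadj A = A"

definition proj :: "complex^'d \<Rightarrow> complex^'d^'d" where
  "proj \<psi> = (\<chi> i j. \<psi> $ i * cnj (\<psi> $ j))"

definition partial_deriv :: "(real^'m \<Rightarrow> 'a::real_normed_vector) \<Rightarrow> real^'m \<Rightarrow> 'm \<Rightarrow> 'a" where
  "partial_deriv f \<theta> j = vector_derivative (\<lambda>t. f (\<theta> + t *\<^sub>R axis j 1)) (at 0)"

definition is_SLD_family ::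
  "(real^'m \<Rightarrow> complex^'d^'d) \<Rightarrow> real^'m \<Rightarrow> ('m \<Rightarrow> complex^'d^'d) \<Rightarrow> bool" where
  "is_SLD_family \<rho> \<theta> L \<longleftrightarrow>
     (\<forall>j. self_adjoint (L j) \<and>
          partial_deriv \<rho> \<theta> j = (1/2::real) *\<^sub>R (\<rho> \<theta> ** L j + L j ** \<rho> \<theta>))"

definition SLD_info_matrix ::
  "(real^'m \<Rightarrow> complex^'d^'d) \<Rightarrow> real^'m \<Rightarrow> 'm \<Rightarrow> 'm \<Rightarrow> real" where
  "SLD_info_matrix \<rho> \<theta> = (SOME H. \<exists>L. is_SLD_family \<rho> \<theta> L \<and>
      H = (\<lambda>j k. Re (mtrace (L j ** \<rho> \<theta> ** L k))))"

definition C_Upsilon ::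
  "(real^'m \<Rightarrow> complex^'d^'d) \<Rightarrow> complex^'d^'d \<Rightarrow> real^'m \<Rightarrow> 'm \<Rightarrow> 'm \<Rightarrow> real" where
  "C_Upsilon U \<rho>0 \<theta> j k =
     4 * Re (mtrace (partial_deriv U \<theta> j ** \<rho>0 ** cadj (partial_deriv U \<theta> k)))"

end

theory Submission
  imports Defs
begin

text \<open>For a pure input the output state \<open>\<rho> = |\<psi>\<rangle>\<langle>\<psi>|\<close>, \<open>\<psi> = U \<psi>\<^sub>0\<close>, is a projection.
  For a projection the anticommutator equation \<open>\<partial>\<rho> = (\<rho>\<lambda> + \<lambda>\<rho>)/2\<close> fixes \<open>\<lambda>\<rho>\<close> and \<open>\<rho>\<lambda>\<close>,
  so \<open>H\<close> does not depend on the choice of SLDs, and \<open>\<lambda>\<^sub>j = 2 \<partial>\<^sub>j\<rho>\<close> is one.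
  With \<open>\<phi>\<^sub>j = \<partial>\<^sub>jU \<psi>\<^sub>0\<close> and \<open>b\<^sub>j = \<langle>\<phi>\<^sub>j|\<psi>\<rangle>\<close> this gives
  \<open>H\<^sub>j\<^sub>k = 4 Re (b\<^sub>j b\<^sub>k + \<langle>\<phi>\<^sub>k|\<phi>\<^sub>j\<rangle>)\<close> and \<open>C\<^sub>j\<^sub>k = 4 Re \<langle>\<phi>\<^sub>k|\<phi>\<^sub>j\<rangle>\<close>. Differentiating
  \<open>U\<^sup>\<dagger>U = 1\<close> shows that every \<open>b\<^sub>j\<close> is purely imaginary, so \<open>Re (b\<^sub>j b\<^sub>k) = - Im b\<^sub>j Im b\<^sub>k\<close>,
  which vanishes for all \<open>j, k\<close> iff all \<open>b\<^sub>l = tr (U\<rho>\<^sub>0 \<partial>\<^sub>lU\<^sup>\<dagger>)\<close> vanish.\<close>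

text \<open>\<open>cinner x y\<close> is linear in \<open>x\<close>: in Dirac notation it is \<open>\<langle>y|x\<rangle>\<close>, and \<open>outer x y = |x\<rangle>\<langle>y|\<close>.\<close>

definition cinner :: "complex^'n \<Rightarrow> complex^'n \<Rightarrow> complex" where
  "cinner x y = (\<Sum>i\<in>UNIV. x $ i * cnj (y $ i))"

definition outer :: "complex^'n \<Rightarrow> complex^'n \<Rightarrow> complex^'n^'n" where
  "outer x y = (\<chi> i j. x $ i * cnj (y $ j))"

lemma matrix_mult_bounded_bilinear:
  "bounded_bilinear ((**) :: complex^'n^'n \<Rightarrow> complex^'n^'n \<Rightarrow> complex^'n^'n)"
proof -
  have "bilinear ((**) :: complex^'n^'n \<Rightarrow> complex^'n^'n \<Rightarrow> complex^'n^'n)"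
    unfolding bilinear_def
  proof (intro allI conjI linearI)
    fix A B C :: "complex^'n^'n" and r :: real
    show "A ** (B + C) = A ** B + A ** C" by (rule matrix_add_ldistrib)
    show "(B + C) ** A = B ** A + C ** A"
      by (simp add: vec_eq_iff matrix_matrix_mult_def sum.distrib distrib_right)
    show "A ** (r *\<^sub>R B) = r *\<^sub>R (A ** B)" "(r *\<^sub>R B) ** A = r *\<^sub>R (B ** A)"
      by (simp_all add: vec_eq_iff matrix_matrix_mult_def scaleR_sum_right)
  qed
  then show ?thesis
    using bilinear_conv_bounded_bilinear by blast
qed

lemma cadj_bounded_linear: "bounded_linear (cadj :: complex^'n^'n \<Rightarrow> complex^'n^'n)"
proof -
  have "linear (cadj :: complex^'n^'n \<Rightarrow> complex^'n^'n)"
    by (intro linearI) (simp_all add: vec_eq_iff cadj_def)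
  then show ?thesis
    using linear_conv_bounded_linear by blast
qed

interpretation matrix_mult: bounded_bilinear "(**) :: complex^'n^'n \<Rightarrow> complex^'n^'n \<Rightarrow> complex^'n^'n"
  by (rule matrix_mult_bounded_bilinear)

lemmas has_vector_derivative_cadj = bounded_linear.has_vector_derivative[OF cadj_bounded_linear]

lemma cinner_add_left: "cinner (x + z) y = cinner x y + cinner z y"
  by (simp add: cinner_def sum.distrib distrib_right)

lemma cinner_add_right: "cinner x (y + z) = cinner x y + cinner x z"
  by (simp add: cinner_def sum.distrib distrib_left)

lemma cinner_scaleC_left: "cinner (c *s x) y = c * cinner x y"
  by (simp add: cinner_def sum_distrib_left mult_ac)

lemma cinner_minus_left: "cinner (- x) y = - cinner x y"
  by (simp add: cinner_def sum_negf)

lemma cnj_cinner: "cnj (cinner x y) = cinner y x"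
  by (simp add: cinner_def mult_ac)

lemma cinner_self: "cinner x x = of_real ((norm x)\<^sup>2)"
proof -
  have "z * cnj z = of_real (z \<bullet> z)" for z :: complex
    by (metis complex_norm_square power2_norm_eq_inner)
  then show ?thesis
    by (simp add: cinner_def power2_norm_eq_inner inner_vec_def)
qed

lemma cinner_matrix_vector_mult_right: "cinner x (A *v y) = cinner (cadj A *v x) y"
proof -
  have "cinner x (A *v y) = (\<Sum>i\<in>UNIV. \<Sum>j\<in>UNIV. x $ i * cnj (A $ i $ j) * cnj (y $ j))"
    by (simp add: cinner_def matrix_vector_mult_def sum_distrib_left mult_ac)
  also have "\<dots> = (\<Sum>j\<in>UNIV. \<Sum>i\<in>UNIV. x $ i * cnj (A $ i $ j) * cnj (y $ j))"
    by (rule sum.swap)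
  also have "\<dots> = cinner (cadj A *v x) y"
    by (simp add: cinner_def matrix_vector_mult_def cadj_def sum_distrib_left mult_ac)
  finally show ?thesis .
qed

lemma unitary_cinner: "unitary_mat U \<Longrightarrow> cinner (U *v x) (U *v y) = cinner x y"
  by (simp add: cinner_matrix_vector_mult_right matrix_vector_mul_assoc unitary_mat_def)

lemma Re_cinner_eq_0_if_skew:
  assumes "cinner y x = - cinner x y"
  shows "Re (cinner x y) = 0"
proof -
  have "Re (cnj (cinner x y)) = Re (- cinner x y)"
    using assms by (simp add: cnj_cinner)
  then show ?thesis by simp
qed

lemma outer_mult_outer: "outer x y ** outer z w = outer (cinner z y *s x) w"
  by (simp add: vec_eq_iff matrix_matrix_mult_def outer_def cinner_def
      sum_distrib_left sum_distrib_right mult_ac)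

lemma matrix_mult_outer: "A ** outer x y = outer (A *v x) y"
  by (simp add: vec_eq_iff matrix_matrix_mult_def outer_def matrix_vector_mult_def
      sum_distrib_left mult_ac)

lemma outer_mult_cadj: "outer x y ** cadj B = outer x (B *v y)"
  by (simp add: vec_eq_iff matrix_matrix_mult_def outer_def matrix_vector_mult_def cadj_def
      sum_distrib_left mult_ac)

lemma outer_minus_left: "outer (- x) y = - outer x y"
  by (simp add: vec_eq_iff outer_def)

lemma cadj_add: "cadj (A + B) = cadj A + cadj B"
  by (simp add: vec_eq_iff cadj_def)

lemma cadj_scaleR: "cadj (r *\<^sub>R A) = r *\<^sub>R cadj A"
  by (simp add: vec_eq_iff cadj_def)

lemma cadj_outer: "cadj (outer x y) = outer y x"
  by (simp add: vec_eq_iff outer_def cadj_def)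

lemma mtrace_outer: "mtrace (outer x y) = cinner x y"
  by (simp add: mtrace_def outer_def cinner_def)

lemma mtrace_add: "mtrace (A + B) = mtrace A + mtrace B"
  by (simp add: mtrace_def sum.distrib)

lemma mtrace_scaleR: "mtrace (r *\<^sub>R A) = r *\<^sub>R mtrace A"
  by (simp add: mtrace_def scaleR_sum_right)

lemma proj_eq_outer: "proj x = outer x x"
  by (simp add: proj_def outer_def)

lemma mtrace_sandwich_proj: "mtrace (A ** proj x ** cadj B) = cinner (A *v x) (B *v x)"
  by (simp add: proj_eq_outer matrix_mult_outer outer_mult_cadj mtrace_outer)

lemma anticommutator_projection_eq_0:
  fixes P K :: "complex^'n^'n"
  assumes idem: "P ** P = P" and anti: "P ** K + K ** P = 0"
  shows "P ** K = 0" and "K ** P = 0"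
proof -
  have left: "P ** K + P ** K ** P = 0"
    using arg_cong[OF anti, of "(**) P"]
    by (simp add: matrix_mult.add_right matrix_mul_assoc idem)
  have right: "P ** K ** P + K ** P = 0"
    using arg_cong[OF anti, of "\<lambda>X. X ** P"]
    by (simp add: matrix_mult.add_left matrix_mul_assoc[symmetric] idem)
  have comm: "P ** K = K ** P"
    using left right by (metis add.commute add_left_imp_eq)
  then have "2 *\<^sub>R (P ** K) = 0"
    using anti by (simp add: scaleR_2)
  then show "P ** K = 0" by simp
  with comm show "K ** P = 0" by simp
qed

lemma anticommutator_projection_cancel:
  fixes P A A' :: "complex^'n^'n"
  assumes idem: "P ** P = P" and eq: "P ** A' + A' ** P = P ** A + A ** P"
  shows "A' ** P = A ** P" and "P ** A' = P ** A"
proof -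
  have "P ** (A' - A) + (A' - A) ** P = 0"
    using eq by (simp add: matrix_mult.diff_left matrix_mult.diff_right algebra_simps)
  from anticommutator_projection_eq_0[OF idem this]
  show "A' ** P = A ** P" and "P ** A' = P ** A"
    by (simp_all add: matrix_mult.diff_left matrix_mult.diff_right)
qed

lemma SLD_info_matrix_projection:
  assumes idem: "\<rho> \<theta> ** \<rho> \<theta> = \<rho> \<theta>" and sld: "is_SLD_family \<rho> \<theta> L"
  shows "SLD_info_matrix \<rho> \<theta> = (\<lambda>j k. Re (mtrace (L j ** \<rho> \<theta> ** L k)))"
proof -
  obtain L' where sld': "is_SLD_family \<rho> \<theta> L'"
    and H: "SLD_info_matrix \<rho> \<theta> = (\<lambda>j k. Re (mtrace (L' j ** \<rho> \<theta> ** L' k)))"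
    using someI_ex[of "\<lambda>H. \<exists>L. is_SLD_family \<rho> \<theta> L \<and> H = (\<lambda>j k. Re (mtrace (L j ** \<rho> \<theta> ** L k)))"]
      sld unfolding SLD_info_matrix_def by blast
  have "\<rho> \<theta> ** L' j + L' j ** \<rho> \<theta> = \<rho> \<theta> ** L j + L j ** \<rho> \<theta>" for j
    using sld sld' unfolding is_SLD_family_def by (metis scaleR_left_imp_eq zero_neq_numeral
        divide_eq_0_iff one_neq_zero)
  then have "L' j ** \<rho> \<theta> ** L' k = L j ** \<rho> \<theta> ** L k" for j k
    using anticommutator_projection_cancel[OF idem] by (metis matrix_mul_assoc)
  then show ?thesis
    by (simp add: H)
qed

text \<open>The skewness hypothesis is the derivative of \<open>\<langle>\<psi>|\<psi>\<rangle> = 1\<close>.\<close>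

lemma SLD_info_matrix_pure:
  fixes \<psi> :: "complex^'n" and \<phi> :: "'m::finite \<Rightarrow> complex^'n"
  assumes state: "\<rho> \<theta> = outer \<psi> \<psi>" and normed: "cinner \<psi> \<psi> = 1"
    and deriv: "\<And>j. partial_deriv \<rho> \<theta> j = outer \<psi> (\<phi> j) + outer (\<phi> j) \<psi>"
    and skew: "\<And>j. cinner (\<phi> j) \<psi> = - cinner \<psi> (\<phi> j)"
  shows "SLD_info_matrix \<rho> \<theta> =
    (\<lambda>j k. 4 * Re (cinner \<psi> (\<phi> j) * cinner \<psi> (\<phi> k) + cinner (\<phi> j) (\<phi> k)))"
proof -
  define R where "R j = outer \<psi> (\<phi> j) + outer (\<phi> j) \<psi>" for j
  have idem: "\<rho> \<theta> ** \<rho> \<theta> = \<rho> \<theta>"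
    by (simp add: state outer_mult_outer normed)
  have anticomm: "\<rho> \<theta> ** R j + R j ** \<rho> \<theta> = R j" for j
    by (simp add: R_def state matrix_mult.add_left matrix_mult.add_right outer_mult_outer
        normed skew outer_minus_left)
  have "is_SLD_family \<rho> \<theta> (\<lambda>j. 2 *\<^sub>R R j)"
    unfolding is_SLD_family_def self_adjoint_def
    by (simp add: cadj_scaleR R_def cadj_add cadj_outer deriv matrix_mult.scaleR_left
        matrix_mult.scaleR_right anticomm[unfolded R_def] flip: scaleR_add_right)
  moreover have "mtrace (R j ** \<rho> \<theta> ** R k) =
      cinner \<psi> (\<phi> j) * cinner \<psi> (\<phi> k) + cinner (\<phi> j) (\<phi> k)" for j k
    by (simp add: R_def state matrix_mult.add_left matrix_mult.add_right outer_mult_outer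
        mtrace_add mtrace_outer cinner_scaleC_left cinner_add_left cinner_minus_left
        normed skew algebra_simps)
  ultimately show ?thesis
    using SLD_info_matrix_projection[of \<rho> \<theta>, OF idem]
    by (simp add: matrix_mult.scaleR_left matrix_mult.scaleR_right mtrace_scaleR)
qed

lemma has_vector_derivative_partial_deriv:
  fixes f :: "real^'m \<Rightarrow> 'a::real_normed_vector"
  assumes "f differentiable (at \<theta>)"
  shows "((\<lambda>t. f (\<theta> + t *\<^sub>R axis j 1)) has_vector_derivative partial_deriv f \<theta> j) (at 0)"
proof -
  obtain f' where f': "(f has_derivative f') (at \<theta>)"
    using assms unfolding differentiable_def by blast
  have line: "((\<lambda>t::real. \<theta> + t *\<^sub>R axis j 1) has_derivative (\<lambda>t. t *\<^sub>R axis j 1)) (at 0)"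
    by (auto intro!: derivative_eq_intros)
  have "((\<lambda>t. f (\<theta> + t *\<^sub>R axis j 1)) has_derivative (\<lambda>t. f' (t *\<^sub>R axis j 1))) (at 0)"
    using diff_chain_at[OF line, of f f'] f' by (simp add: o_def)
  then have "((\<lambda>t. f (\<theta> + t *\<^sub>R axis j 1)) has_vector_derivative f' (axis j 1)) (at 0)"
    using has_derivative_linear[OF f'] by (simp add: has_vector_derivative_def linear_cmul)
  moreover from this have "partial_deriv f \<theta> j = f' (axis j 1)"
    unfolding partial_deriv_def by (rule vector_derivative_at)
  ultimately show ?thesis by simp
qed

lemma unitary_partial_deriv_skew:
  assumes unitary: "\<And>\<theta>. unitary_mat (U \<theta>)" and diff: "U differentiable (at \<theta>)"
  shows "cadj (U \<theta>) ** partial_deriv U \<theta> j + cadj (partial_deriv U \<theta> j) ** U \<theta> = 0"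
proof -
  have "((\<lambda>t. cadj (U (\<theta> + t *\<^sub>R axis j 1)) ** U (\<theta> + t *\<^sub>R axis j 1)) has_vector_derivative
      cadj (U \<theta>) ** partial_deriv U \<theta> j + cadj (partial_deriv U \<theta> j) ** U \<theta>) (at 0)"
    using matrix_mult.has_vector_derivative[OF has_vector_derivative_cadj]
      has_vector_derivative_partial_deriv[OF diff] by fastforce
  moreover have "(\<lambda>t. cadj (U (\<theta> + t *\<^sub>R axis j 1)) ** U (\<theta> + t *\<^sub>R axis j 1)) = (\<lambda>t. mat 1)"
    using unitary unfolding unitary_mat_def by auto
  ultimately show ?thesis
    using vector_derivative_unique_at has_vector_derivative_const by metis
qed

lemma partial_deriv_unitary_conjugation:
  assumes "U differentiable (at \<theta>)"
  shows "partial_deriv (\<lambda>\<theta>. U \<theta> ** P ** cadj (U \<theta>)) \<theta> j =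
    U \<theta> ** P ** cadj (partial_deriv U \<theta> j) + partial_deriv U \<theta> j ** P ** cadj (U \<theta>)"
proof -
  note dU = has_vector_derivative_partial_deriv[OF assms, of j]
  have "((\<lambda>t. U (\<theta> + t *\<^sub>R axis j 1) ** P ** cadj (U (\<theta> + t *\<^sub>R axis j 1))) has_vector_derivative
      U \<theta> ** P ** cadj (partial_deriv U \<theta> j) + partial_deriv U \<theta> j ** P ** cadj (U \<theta>)) (at 0)"
    using matrix_mult.has_vector_derivative[OF
        matrix_mult.has_vector_derivative[OF dU has_vector_derivative_const]
        has_vector_derivative_cadj[OF dU]]
    by (simp add: add.commute)
  then show ?thesis
    unfolding partial_deriv_def by (rule vector_derivative_at)
qed

lemma SLD_info_matrix_unitary_pure:
  assumes unitary: "\<And>\<theta>. unitary_mat (U \<theta>)" and diff: "U differentiable (at \<theta>)"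
    and normed: "norm \<psi>0 = 1"
  defines "\<psi> \<equiv> U \<theta> *v \<psi>0" and "\<phi> \<equiv> \<lambda>j. partial_deriv U \<theta> j *v \<psi>0"
  shows "SLD_info_matrix (\<lambda>\<theta>. U \<theta> ** proj \<psi>0 ** cadj (U \<theta>)) \<theta> =
      (\<lambda>j k. 4 * Re (cinner \<psi> (\<phi> j) * cinner \<psi> (\<phi> k) + cinner (\<phi> j) (\<phi> k)))"
    and "cinner (\<phi> j) \<psi> = - cinner \<psi> (\<phi> j)"
proof -
  show skew: "cinner (\<phi> j) \<psi> = - cinner \<psi> (\<phi> j)" for j
  proof -
    have "0 = cinner \<psi>0 ((cadj (U \<theta>) ** partial_deriv U \<theta> j
        + cadj (partial_deriv U \<theta> j) ** U \<theta>) *v \<psi>0)"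
      by (simp add: unitary_partial_deriv_skew[OF unitary diff] cinner_def)
    also have "\<dots> = cinner \<psi> (\<phi> j) + cinner (\<phi> j) \<psi>"
      by (simp add: \<psi>_def \<phi>_def matrix_vector_mult_add_rdistrib cinner_add_right
          cinner_matrix_vector_mult_right cadj_def matrix_vector_mul_assoc[symmetric])
    finally show ?thesis
      by (simp add: eq_neg_iff_add_eq_0 add.commute)
  qed
  have normed_\<psi>: "cinner \<psi> \<psi> = 1"
    using unitary_cinner[OF unitary] cinner_self[of \<psi>0] normed by (simp add: \<psi>_def)
  show "SLD_info_matrix (\<lambda>\<theta>. U \<theta> ** proj \<psi>0 ** cadj (U \<theta>)) \<theta> =
      (\<lambda>j k. 4 * Re (cinner \<psi> (\<phi> j) * cinner \<psi> (\<phi> k) + cinner (\<phi> j) (\<phi> k)))"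
  proof (rule SLD_info_matrix_pure[OF _ normed_\<psi> _ skew])
    show "U \<theta> ** proj \<psi>0 ** cadj (U \<theta>) = outer \<psi> \<psi>"
      by (simp add: \<psi>_def proj_eq_outer matrix_mult_outer outer_mult_cadj)
    show "partial_deriv (\<lambda>\<theta>. U \<theta> ** proj \<psi>0 ** cadj (U \<theta>)) \<theta> j =
        outer \<psi> (\<phi> j) + outer (\<phi> j) \<psi>" for j
      unfolding partial_deriv_unitary_conjugation[OF diff]
      by (simp add: \<psi>_def \<phi>_def proj_eq_outer matrix_mult_outer outer_mult_cadj add.commute)
  qed
qed

lemma imaginary_products_vanish_iff:
  fixes b :: "'m \<Rightarrow> complex"
  assumes "\<And>l. Re (b l) = 0"
  shows "(\<lambda>j k. 4 * Re (b j * b k + c j k)) = (\<lambda>j k. 4 * Re (c j k)) \<longleftrightarrow> (\<forall>l. b l = 0)"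
proof -
  have "(\<lambda>j k. 4 * Re (b j * b k + c j k)) = (\<lambda>j k. 4 * Re (c j k)) \<longleftrightarrow>
      (\<forall>j k. Im (b j) * Im (b k) = 0)"
    by (simp add: fun_eq_iff assms)
  also have "\<dots> \<longleftrightarrow> (\<forall>l. b l = 0)"
    using assms by (metis complex_eq_iff mult_eq_0_iff zero_complex.simps)
  finally show ?thesis .
qed

theorem lemma10:
  fixes U :: "real^'m \<Rightarrow> complex^'d^'d"
    and \<psi>0 :: "complex^'d"
    and \<theta> :: "real^'m"
  assumes unitary: "\<And>\<theta>. unitary_mat (U \<theta>)"
    and diff: "\<And>\<theta>. U differentiable (at \<theta>)"
    and pure: "norm \<psi>0 = 1"
  shows "SLD_info_matrix (\<lambda>\<theta>. U \<theta> ** proj \<psi>0 ** cadj (U \<theta>)) \<theta> = C_Upsilon U (proj \<psi>0) \<theta>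
     \<longleftrightarrow> (\<forall>l. mtrace (U \<theta> ** proj \<psi>0 ** cadj (partial_deriv U \<theta> l)) = 0)"
proof -
  define \<phi> where "\<phi> j = partial_deriv U \<theta> j *v \<psi>0" for j
  define b where "b j = cinner (U \<theta> *v \<psi>0) (\<phi> j)" for j
  note unitary_pure = SLD_info_matrix_unitary_pure[OF unitary diff pure]
  have H: "SLD_info_matrix (\<lambda>\<theta>. U \<theta> ** proj \<psi>0 ** cadj (U \<theta>)) \<theta> =
      (\<lambda>j k. 4 * Re (b j * b k + cinner (\<phi> j) (\<phi> k)))"
    using unitary_pure(1) by (simp add: b_def \<phi>_def)
  have C: "C_Upsilon U (proj \<psi>0) \<theta> = (\<lambda>j k. 4 * Re (cinner (\<phi> j) (\<phi> k)))"
    by (simp add: fun_eq_iff C_Upsilon_def mtrace_sandwich_proj \<phi>_def)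
  have Re_b: "Re (b l) = 0" for l
    using Re_cinner_eq_0_if_skew[OF unitary_pure(2)] by (simp add: b_def \<phi>_def)
  have trace: "mtrace (U \<theta> ** proj \<psi>0 ** cadj (partial_deriv U \<theta> l)) = b l" for l
    by (simp add: mtrace_sandwich_proj b_def \<phi>_def)
  show ?thesis
    unfolding H C trace imaginary_products_vanish_iff[OF Re_b] ..
qed

end
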